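(* Let $\mathcal{C}$ be a deflation-exact category and $\mathcal{A}\subseteq\mathcal{C}$ an admissibly deflation-percolating subcategory. Let $a\colon U\rightarrowtail V$ be an $\mathcal{A}^{-1}$-inflation and $b\colon V\twoheadrightarrow W$ an $\mathcal{A}^{-1}$-deflation. Then $b\circ a$ is an admissible morphism whose kernel and cokernel lie in $\mathcal{A}$.
   Context: A conflation category is an additive category with a class of kernel-cokernel pairs (closed under isomorphisms) called conflations; first map an inflation, second a deflation. A deflation-exact category is a conflation category satisfying: (R0) $1_0$ is a deflation; (R1) composites of deflations are deflations; (R2) pullbacks of deflations along arbitrary morphisms exist and are deflations. A morphism is admissible if it factors as a deflation followed by an inflation. A non-empty full subcategory $\mathcal{A}$ is admissibly deflation-percolating if: (A1) for every conflation $A'\rightarrowtail A\twoheadrightarrow A''$, $A\in\mathcal{A}$ iff $A',A''\in\mathcal{A}$; (A2) every morphism $C\to A$ with $A\in\mathcal{A}$ factors as a deflation $C\twoheadrightarrow A'$ followed by an inflation $A'\rightarrowtail A$ with $A'\in\mathcal{A}$; (A3) if $a\colon C\rightarrowtail D$ is an inflation and $b\colon C\twoheadrightarrow A$ a deflation with $A\in\mathcal{A}$, the pushout of $a$ along $b$ exists and yields a deflation $D\twoheadrightarrow P$ and an inflation $A\rightarrowtail P$. An $\mathcal{A}^{-1}$-inflation is an inflation with cokernel in $\mathcal{A}$; an $\mathcal{A}^{-1}$-deflation is a deflation with kernel in $\mathcal{A}$. *)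

theory Defs
  imports Main
begin

text \<open>Categories with explicit object/arrow carriers. Composition cmp C g f means g after f.
  Additive structure (addition, zero maps, negation on hom-sets) is carried as data.\<close>

record ('o, 'm) addcat =
  Ob   :: "'o set"
  Ar   :: "'m set"
  Dom  :: "'m \<Rightarrow> 'o"
  Cod  :: "'m \<Rightarrow> 'o"
  cmp  :: "'m \<Rightarrow> 'm \<Rightarrow> 'm"
  idt  :: "'o \<Rightarrow> 'm"
  addm :: "'m \<Rightarrow> 'm \<Rightarrow> 'm"
  zerm :: "'o \<Rightarrow> 'o \<Rightarrow> 'm"
  negm :: "'m \<Rightarrow> 'm"

definition hom :: "('o, 'm, 'x) addcat_scheme \<Rightarrow> 'o \<Rightarrow> 'o \<Rightarrow> 'm set" where
  "hom C X Y = {f \<in> Ar C. Dom C f = X \<and> Cod C f = Y}"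

definition category :: "('o, 'm, 'x) addcat_scheme \<Rightarrow> bool" where
  "category C \<longleftrightarrow>
    (\<forall>f\<in>Ar C. Dom C f \<in> Ob C \<and> Cod C f \<in> Ob C) \<and>
    (\<forall>X\<in>Ob C. idt C X \<in> hom C X X) \<and>
    (\<forall>X Y Z f g. f \<in> hom C X Y \<longrightarrow> g \<in> hom C Y Z \<longrightarrow> cmp C g f \<in> hom C X Z) \<and>
    (\<forall>W X Y Z f g h. f \<in> hom C W X \<longrightarrow> g \<in> hom C X Y \<longrightarrow> h \<in> hom C Y Z \<longrightarrow>
        cmp C h (cmp C g f) = cmp C (cmp C h g) f) \<and>
    (\<forall>f\<in>Ar C. cmp C (idt C (Cod C f)) f = f \<and> cmp C f (idt C (Dom C f)) = f)"

definition preadditive :: "('o, 'm, 'x) addcat_scheme \<Rightarrow> bool" where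
  "preadditive C \<longleftrightarrow>
    (\<forall>X\<in>Ob C. \<forall>Y\<in>Ob C.
       zerm C X Y \<in> hom C X Y \<and>
       (\<forall>f\<in>hom C X Y. \<forall>g\<in>hom C X Y. addm C f g \<in> hom C X Y) \<and>
       (\<forall>f\<in>hom C X Y. negm C f \<in> hom C X Y) \<and>
       (\<forall>f\<in>hom C X Y. \<forall>g\<in>hom C X Y. \<forall>h\<in>hom C X Y.
           addm C (addm C f g) h = addm C f (addm C g h)) \<and>
       (\<forall>f\<in>hom C X Y. \<forall>g\<in>hom C X Y. addm C f g = addm C g f) \<and>
       (\<forall>f\<in>hom C X Y. addm C (zerm C X Y) f = f) \<and>
       (\<forall>f\<in>hom C X Y. addm C (negm C f) f = zerm C X Y)) \<and>
    (\<forall>X Y Z f f' g. f \<in> hom C X Y \<longrightarrow> f' \<in> hom C X Y \<longrightarrow> g \<in> hom C Y Z \<longrightarrow>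
        cmp C g (addm C f f') = addm C (cmp C g f) (cmp C g f')) \<and>
    (\<forall>X Y Z f g g'. f \<in> hom C X Y \<longrightarrow> g \<in> hom C Y Z \<longrightarrow> g' \<in> hom C Y Z \<longrightarrow>
        cmp C (addm C g g') f = addm C (cmp C g f) (cmp C g' f))"

definition zero_object :: "('o, 'm, 'x) addcat_scheme \<Rightarrow> 'o \<Rightarrow> bool" where
  "zero_object C Z \<longleftrightarrow> Z \<in> Ob C \<and>
    (\<forall>X\<in>Ob C. (\<exists>!f. f \<in> hom C Z X) \<and> (\<exists>!f. f \<in> hom C X Z))"

definition has_biproducts :: "('o, 'm, 'x) addcat_scheme \<Rightarrow> bool" where
  "has_biproducts C \<longleftrightarrow> (\<forall>X\<in>Ob C. \<forall>Y\<in>Ob C. \<exists>P\<in>Ob C. \<exists>i1 i2 p1 p2.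
     i1 \<in> hom C X P \<and> i2 \<in> hom C Y P \<and> p1 \<in> hom C P X \<and> p2 \<in> hom C P Y \<and>
     cmp C p1 i1 = idt C X \<and> cmp C p2 i2 = idt C Y \<and>
     addm C (cmp C i1 p1) (cmp C i2 p2) = idt C P)"

definition additive_category :: "('o, 'm, 'x) addcat_scheme \<Rightarrow> bool" where
  "additive_category C \<longleftrightarrow> category C \<and> preadditive C \<and>
     (\<exists>Z. zero_object C Z) \<and> has_biproducts C"

definition is_iso :: "('o, 'm, 'x) addcat_scheme \<Rightarrow> 'm \<Rightarrow> bool" where
  "is_iso C f \<longleftrightarrow> f \<in> Ar C \<and> (\<exists>g \<in> hom C (Cod C f) (Dom C f).
      cmp C g f = idt C (Dom C f) \<and> cmp C f g = idt C (Cod C f))"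

definition is_kernel :: "('o, 'm, 'x) addcat_scheme \<Rightarrow> 'm \<Rightarrow> 'm \<Rightarrow> bool" where
  "is_kernel C k g \<longleftrightarrow> (\<exists>K B D. k \<in> hom C K B \<and> g \<in> hom C B D \<and> cmp C g k = zerm C K D \<and>
     (\<forall>T t. t \<in> hom C T B \<and> cmp C g t = zerm C T D \<longrightarrow>
        (\<exists>!u. u \<in> hom C T K \<and> cmp C k u = t)))"

definition is_cokernel :: "('o, 'm, 'x) addcat_scheme \<Rightarrow> 'm \<Rightarrow> 'm \<Rightarrow> bool" where
  "is_cokernel C c f \<longleftrightarrow> (\<exists>A B Q. f \<in> hom C A B \<and> c \<in> hom C B Q \<and> cmp C c f = zerm C A Q \<and>
     (\<forall>T t. t \<in> hom C B T \<and> cmp C t f = zerm C A T \<longrightarrow>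
        (\<exists>!u. u \<in> hom C Q T \<and> cmp C u c = t)))"

definition kc_pair :: "('o, 'm, 'x) addcat_scheme \<Rightarrow> 'm \<Rightarrow> 'm \<Rightarrow> bool" where
  "kc_pair C f g \<longleftrightarrow> is_kernel C f g \<and> is_cokernel C g f"

definition conflation_category :: "('o, 'm, 'x) addcat_scheme \<Rightarrow> ('m \<times> 'm) set \<Rightarrow> bool" where
  "conflation_category C E \<longleftrightarrow> additive_category C \<and>
    (\<forall>(f, g) \<in> E. kc_pair C f g) \<and>
    (\<forall>f g f' g' \<alpha> \<beta> \<gamma>. (f, g) \<in> E \<and> kc_pair C f' g' \<and>
        is_iso C \<alpha> \<and> is_iso C \<beta> \<and> is_iso C \<gamma> \<and>
        \<alpha> \<in> hom C (Dom C f) (Dom C f') \<and> \<beta> \<in> hom C (Cod C f) (Cod C f') \<and>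
        \<gamma> \<in> hom C (Cod C g) (Cod C g') \<and>
        cmp C f' \<alpha> = cmp C \<beta> f \<and> cmp C g' \<beta> = cmp C \<gamma> g \<longrightarrow> (f', g') \<in> E)"

definition inflation :: "('o, 'm, 'x) addcat_scheme \<Rightarrow> ('m \<times> 'm) set \<Rightarrow> 'm \<Rightarrow> bool" where
  "inflation C E f \<longleftrightarrow> (\<exists>g. (f, g) \<in> E)"

definition deflation :: "('o, 'm, 'x) addcat_scheme \<Rightarrow> ('m \<times> 'm) set \<Rightarrow> 'm \<Rightarrow> bool" where
  "deflation C E g \<longleftrightarrow> (\<exists>f. (f, g) \<in> E)"

definition is_pullback :: "('o, 'm, 'x) addcat_scheme \<Rightarrow> 'm \<Rightarrow> 'm \<Rightarrow> 'm \<Rightarrow> 'm \<Rightarrow> bool" where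
  "is_pullback C g t p q \<longleftrightarrow> (\<exists>B D T P. g \<in> hom C B D \<and> t \<in> hom C T D \<and>
     p \<in> hom C P B \<and> q \<in> hom C P T \<and> cmp C g p = cmp C t q \<and>
     (\<forall>S x y. x \<in> hom C S B \<and> y \<in> hom C S T \<and> cmp C g x = cmp C t y \<longrightarrow>
        (\<exists>!u. u \<in> hom C S P \<and> cmp C p u = x \<and> cmp C q u = y)))"

definition is_pushout :: "('o, 'm, 'x) addcat_scheme \<Rightarrow> 'm \<Rightarrow> 'm \<Rightarrow> 'm \<Rightarrow> 'm \<Rightarrow> bool" where
  "is_pushout C a b a' b' \<longleftrightarrow> (\<exists>X D A P. a \<in> hom C X D \<and> b \<in> hom C X A \<and>
     b' \<in> hom C D P \<and> a' \<in> hom C A P \<and> cmp C b' a = cmp C a' b \<and>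
     (\<forall>S x y. x \<in> hom C D S \<and> y \<in> hom C A S \<and> cmp C x a = cmp C y b \<longrightarrow>
        (\<exists>!u. u \<in> hom C P S \<and> cmp C u b' = x \<and> cmp C u a' = y)))"

definition deflation_exact :: "('o, 'm, 'x) addcat_scheme \<Rightarrow> ('m \<times> 'm) set \<Rightarrow> bool" where
  "deflation_exact C E \<longleftrightarrow> conflation_category C E \<and>
    \<comment> \<open>R0\<close>
    (\<exists>Z. zero_object C Z \<and> deflation C E (idt C Z)) \<and>
    \<comment> \<open>R1\<close>
    (\<forall>f g. deflation C E f \<and> deflation C E g \<and> Cod C f = Dom C g \<longrightarrow> deflation C E (cmp C g f)) \<and>
    \<comment> \<open>R2\<close>
    (\<forall>g t. deflation C E g \<and> t \<in> Ar C \<and> Cod C t = Cod C g \<longrightarrow>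
        (\<exists>p q. is_pullback C g t p q) \<and>
        (\<forall>p q. is_pullback C g t p q \<longrightarrow> deflation C E q))"

definition admissible :: "('o, 'm, 'x) addcat_scheme \<Rightarrow> ('m \<times> 'm) set \<Rightarrow> 'm \<Rightarrow> bool" where
  "admissible C E f \<longleftrightarrow> (\<exists>d i. deflation C E d \<and> inflation C E i \<and> Cod C d = Dom C i \<and>
      f = cmp C i d)"

definition adm_defl_percolating ::
  "('o, 'm, 'x) addcat_scheme \<Rightarrow> ('m \<times> 'm) set \<Rightarrow> 'o set \<Rightarrow> bool" where
  "adm_defl_percolating C E \<A> \<longleftrightarrow> \<A> \<noteq> {} \<and> \<A> \<subseteq> Ob C \<and>
    \<comment> \<open>A1\<close>
    (\<forall>(f, g) \<in> E. Cod C f \<in> \<A> \<longleftrightarrow> Dom C f \<in> \<A> \<and> Cod C g \<in> \<A>) \<and>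
    \<comment> \<open>A2\<close>
    (\<forall>f X Y. f \<in> hom C X Y \<and> Y \<in> \<A> \<longrightarrow>
        (\<exists>A' d i. A' \<in> \<A> \<and> d \<in> hom C X A' \<and> i \<in> hom C A' Y \<and>
            deflation C E d \<and> inflation C E i \<and> f = cmp C i d)) \<and>
    \<comment> \<open>A3\<close>
    (\<forall>a b. inflation C E a \<and> deflation C E b \<and> Dom C a = Dom C b \<and> Cod C b \<in> \<A> \<longrightarrow>
        (\<exists>a' b'. is_pushout C a b a' b') \<and>
        (\<forall>a' b'. is_pushout C a b a' b' \<longrightarrow> deflation C E b' \<and> inflation C E a'))"

definition A_inflation :: "('o, 'm, 'x) addcat_scheme \<Rightarrow> ('m \<times> 'm) set \<Rightarrow> 'o set \<Rightarrow> 'm \<Rightarrow> bool" where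
  "A_inflation C E \<A> f \<longleftrightarrow> (\<exists>g. (f, g) \<in> E \<and> Cod C g \<in> \<A>)"

definition A_deflation :: "('o, 'm, 'x) addcat_scheme \<Rightarrow> ('m \<times> 'm) set \<Rightarrow> 'o set \<Rightarrow> 'm \<Rightarrow> bool" where
  "A_deflation C E \<A> g \<longleftrightarrow> (\<exists>k. (k, g) \<in> E \<and> Dom C k \<in> \<A>)"

end

theory Submission
  imports Defs
begin

text \<open>Write a as the kernel of c : V \<twoheadrightarrow> A and b as the cokernel of k : B \<rightarrowtail> V,
  with A, B in \<A>. By (A2) the composite c k factors as a deflation d : B \<twoheadrightarrow> D
  followed by an inflation i : D \<rightarrowtail> A with D in \<A>. A diagram chase shows that the kernel
  of d is a kernel of b a and the cokernel of i is a cokernel of b a; both lie in \<A> by (A1).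
  For admissibility push k out along d (A3) to get a deflation p : V \<twoheadrightarrow> P. The induced
  r : P \<rightarrow> A is an epimorphism onto an object of \<A>, hence a deflation, and the induced
  s : P \<rightarrow> W is the cokernel of the pushout inflation D \<rightarrowtail> P. Then b a is the deflation
  U \<twoheadrightarrow> ker r obtained by pulling p back (R2), followed by s restricted to ker r, which is
  a kernel of the deflation coker(b a) and hence an inflation.\<close>

definition is_epi :: "('o, 'm, 'x) addcat_scheme \<Rightarrow> 'm \<Rightarrow> bool" where
  "is_epi C h \<longleftrightarrow> (\<forall>T x y. x \<in> hom C (Cod C h) T \<longrightarrow> y \<in> hom C (Cod C h) T \<longrightarrow>
      cmp C x h = cmp C y h \<longrightarrow> x = y)"

definition is_mono :: "('o, 'm, 'x) addcat_scheme \<Rightarrow> 'm \<Rightarrow> bool" where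
  "is_mono C h \<longleftrightarrow> (\<forall>T x y. x \<in> hom C T (Dom C h) \<longrightarrow> y \<in> hom C T (Dom C h) \<longrightarrow>
      cmp C h x = cmp C h y \<longrightarrow> x = y)"

locale preadditive_cat =
  fixes C :: "('o, 'm, 'x) addcat_scheme"
  assumes is_category: "category C" and is_preadditive: "preadditive C"
begin

lemma homD:
  assumes "f \<in> hom C X Y"
  shows "f \<in> Ar C" "Dom C f = X" "Cod C f = Y" "X \<in> Ob C" "Y \<in> Ob C"
  using assms is_category unfolding hom_def category_def by auto

lemma cmp_hom: "f \<in> hom C X Y \<Longrightarrow> g \<in> hom C Y Z \<Longrightarrow> cmp C g f \<in> hom C X Z"
  using is_category unfolding category_def by blast

lemma cmp_assoc:
  "f \<in> hom C W X \<Longrightarrow> g \<in> hom C X Y \<Longrightarrow> h \<in> hom C Y Z \<Longrightarrow>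
   cmp C h (cmp C g f) = cmp C (cmp C h g) f"
  using is_category unfolding category_def by blast

lemma idt_hom: "X \<in> Ob C \<Longrightarrow> idt C X \<in> hom C X X"
  using is_category unfolding category_def by blast

lemma cmp_idt_left: "f \<in> hom C X Y \<Longrightarrow> cmp C (idt C Y) f = f"
  using is_category homD(1,3) unfolding category_def by metis

lemma cmp_idt_right: "f \<in> hom C X Y \<Longrightarrow> cmp C f (idt C X) = f"
  using is_category homD(1,2) unfolding category_def by metis

lemma hom_abelian_group:
  assumes "X \<in> Ob C" and "Y \<in> Ob C"
  shows "zerm C X Y \<in> hom C X Y"
    and "\<And>f g. f \<in> hom C X Y \<Longrightarrow> g \<in> hom C X Y \<Longrightarrow> addm C f g \<in> hom C X Y"
    and "\<And>f. f \<in> hom C X Y \<Longrightarrow> negm C f \<in> hom C X Y"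
    and "\<And>f g h. f \<in> hom C X Y \<Longrightarrow> g \<in> hom C X Y \<Longrightarrow> h \<in> hom C X Y \<Longrightarrow>
           addm C (addm C f g) h = addm C f (addm C g h)"
    and "\<And>f g. f \<in> hom C X Y \<Longrightarrow> g \<in> hom C X Y \<Longrightarrow> addm C f g = addm C g f"
    and "\<And>f. f \<in> hom C X Y \<Longrightarrow> addm C (zerm C X Y) f = f"
    and "\<And>f. f \<in> hom C X Y \<Longrightarrow> addm C (negm C f) f = zerm C X Y"
  using bspec[OF bspec[OF conjunct1[OF is_preadditive[unfolded preadditive_def]] assms(1)] assms(2)]
  by blast+

lemma zerm_hom: "X \<in> Ob C \<Longrightarrow> Y \<in> Ob C \<Longrightarrow> zerm C X Y \<in> hom C X Y"
  by (rule hom_abelian_group(1))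

lemma addm_hom: "f \<in> hom C X Y \<Longrightarrow> g \<in> hom C X Y \<Longrightarrow> addm C f g \<in> hom C X Y"
  using hom_abelian_group(2) homD(4,5) by blast

lemma negm_hom: "f \<in> hom C X Y \<Longrightarrow> negm C f \<in> hom C X Y"
  using hom_abelian_group(3) homD(4,5) by blast

lemma addm_assoc:
  "f \<in> hom C X Y \<Longrightarrow> g \<in> hom C X Y \<Longrightarrow> h \<in> hom C X Y \<Longrightarrow>
   addm C (addm C f g) h = addm C f (addm C g h)"
  using hom_abelian_group(4) homD(4,5) by blast

lemma addm_commute: "f \<in> hom C X Y \<Longrightarrow> g \<in> hom C X Y \<Longrightarrow> addm C f g = addm C g f"
  using hom_abelian_group(5) homD(4,5) by blast

lemma addm_zerm_left: "f \<in> hom C X Y \<Longrightarrow> addm C (zerm C X Y) f = f"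
  using hom_abelian_group(6) homD(4,5) by blast

lemma addm_negm_left: "f \<in> hom C X Y \<Longrightarrow> addm C (negm C f) f = zerm C X Y"
  using hom_abelian_group(7) homD(4,5) by blast

lemma addm_zerm_right: "f \<in> hom C X Y \<Longrightarrow> addm C f (zerm C X Y) = f"
  using addm_commute addm_zerm_left zerm_hom homD(4,5) by metis

lemma addm_negm_right: "f \<in> hom C X Y \<Longrightarrow> addm C f (negm C f) = zerm C X Y"
  using addm_commute addm_negm_left negm_hom by metis

lemma cmp_addm_distrib_left:
  assumes "f \<in> hom C X Y" and "f' \<in> hom C X Y" and "g \<in> hom C Y Z"
  shows "cmp C g (addm C f f') = addm C (cmp C g f) (cmp C g f')"
proof -
  have "\<forall>X Y Z f f' g. f \<in> hom C X Y \<longrightarrow> f' \<in> hom C X Y \<longrightarrow> g \<in> hom C Y Z \<longrightarrow>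
      cmp C g (addm C f f') = addm C (cmp C g f) (cmp C g f')"
    using is_preadditive unfolding preadditive_def by (elim conjE)
  then show ?thesis using assms by blast
qed

lemma cmp_addm_distrib_right:
  assumes "f \<in> hom C X Y" and "g \<in> hom C Y Z" and "g' \<in> hom C Y Z"
  shows "cmp C (addm C g g') f = addm C (cmp C g f) (cmp C g' f)"
proof -
  have "\<forall>X Y Z f g g'. f \<in> hom C X Y \<longrightarrow> g \<in> hom C Y Z \<longrightarrow> g' \<in> hom C Y Z \<longrightarrow>
      cmp C (addm C g g') f = addm C (cmp C g f) (cmp C g' f)"
    using is_preadditive unfolding preadditive_def by (elim conjE)
  then show ?thesis using assms by blast
qed

lemma addm_idem_eq_zerm:
  assumes x: "x \<in> hom C X Y" and idem: "addm C x x = x"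
  shows "x = zerm C X Y"
proof -
  have "zerm C X Y = addm C (negm C x) (addm C x x)"
    using addm_negm_left[OF x] idem by simp
  also have "\<dots> = x"
    using addm_assoc[OF negm_hom[OF x] x x] addm_negm_left[OF x] addm_zerm_left[OF x] by simp
  finally show ?thesis by simp
qed

lemma cmp_zerm_right:
  assumes g: "g \<in> hom C Y Z" and X: "X \<in> Ob C"
  shows "cmp C g (zerm C X Y) = zerm C X Z"
proof -
  have z: "zerm C X Y \<in> hom C X Y" using zerm_hom[OF X homD(4)[OF g]] .
  have "cmp C g (zerm C X Y) = addm C (cmp C g (zerm C X Y)) (cmp C g (zerm C X Y))"
    using cmp_addm_distrib_left[OF z z g] addm_zerm_left[OF z] by simp
  then show ?thesis using addm_idem_eq_zerm[OF cmp_hom[OF z g]] by simp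
qed

lemma cmp_zerm_left:
  assumes f: "f \<in> hom C X Y" and Z: "Z \<in> Ob C"
  shows "cmp C (zerm C Y Z) f = zerm C X Z"
proof -
  have z: "zerm C Y Z \<in> hom C Y Z" using zerm_hom[OF homD(5)[OF f] Z] .
  have "cmp C (zerm C Y Z) f = addm C (cmp C (zerm C Y Z) f) (cmp C (zerm C Y Z) f)"
    using cmp_addm_distrib_right[OF f z z] addm_zerm_left[OF z] by simp
  then show ?thesis using addm_idem_eq_zerm[OF cmp_hom[OF f z]] by simp
qed

lemma negm_unique:
  assumes a: "a \<in> hom C X Y" and b: "b \<in> hom C X Y" and sum: "addm C a b = zerm C X Y"
  shows "a = negm C b"
proof -
  have "a = addm C a (addm C b (negm C b))"
    using addm_negm_right[OF b] addm_zerm_right[OF a] by simp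
  also have "\<dots> = negm C b"
    using addm_assoc[OF a b negm_hom[OF b]] sum addm_zerm_left[OF negm_hom[OF b]] by simp
  finally show ?thesis .
qed

lemma negm_negm: "f \<in> hom C X Y \<Longrightarrow> negm C (negm C f) = f"
  using negm_unique[OF _ negm_hom addm_negm_right] by metis

lemma negm_zerm: "X \<in> Ob C \<Longrightarrow> Y \<in> Ob C \<Longrightarrow> negm C (zerm C X Y) = zerm C X Y"
  using negm_unique[OF zerm_hom zerm_hom addm_zerm_left[OF zerm_hom]] by metis

lemma cmp_negm_right:
  assumes f: "f \<in> hom C X Y" and g: "g \<in> hom C Y Z"
  shows "cmp C g (negm C f) = negm C (cmp C g f)"
proof -
  have "addm C (cmp C g (negm C f)) (cmp C g f) = zerm C X Z"
    using cmp_addm_distrib_left[OF negm_hom[OF f] f g] addm_negm_left[OF f]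
      cmp_zerm_right[OF g homD(4)[OF f]] by simp
  then show ?thesis using negm_unique[OF cmp_hom[OF negm_hom[OF f] g] cmp_hom[OF f g]] by simp
qed

lemma epiI:
  assumes h: "h \<in> hom C X Y"
    and "\<And>T x y. x \<in> hom C Y T \<Longrightarrow> y \<in> hom C Y T \<Longrightarrow> cmp C x h = cmp C y h \<Longrightarrow> x = y"
  shows "is_epi C h"
  using assms homD(3)[OF h] unfolding is_epi_def by blast

lemma epiD:
  "is_epi C h \<Longrightarrow> h \<in> hom C X Y \<Longrightarrow> x \<in> hom C Y T \<Longrightarrow> y \<in> hom C Y T \<Longrightarrow>
   cmp C x h = cmp C y h \<Longrightarrow> x = y"
  using homD(3) unfolding is_epi_def by blast

lemma monoI:
  assumes h: "h \<in> hom C X Y"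
    and "\<And>T x y. x \<in> hom C T X \<Longrightarrow> y \<in> hom C T X \<Longrightarrow> cmp C h x = cmp C h y \<Longrightarrow> x = y"
  shows "is_mono C h"
  using assms homD(2)[OF h] unfolding is_mono_def by blast

lemma monoD:
  "is_mono C h \<Longrightarrow> h \<in> hom C X Y \<Longrightarrow> x \<in> hom C T X \<Longrightarrow> y \<in> hom C T X \<Longrightarrow>
   cmp C h x = cmp C h y \<Longrightarrow> x = y"
  using homD(2) unfolding is_mono_def by blast

lemma monoI_zerm:
  assumes f: "f \<in> hom C X Y"
    and trivial_kernel: "\<And>T y. y \<in> hom C T X \<Longrightarrow> cmp C f y = zerm C T Y \<Longrightarrow> y = zerm C T X"
  shows "is_mono C f"
proof (rule monoI[OF f])
  fix T y1 y2 assume y1: "y1 \<in> hom C T X" and y2: "y2 \<in> hom C T X"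
    and eq: "cmp C f y1 = cmp C f y2"
  have n: "negm C y2 \<in> hom C T X" using negm_hom[OF y2] .
  have "cmp C f (addm C y1 (negm C y2)) = zerm C T Y"
    using cmp_addm_distrib_left[OF y1 n f] eq cmp_negm_right[OF y2 f]
      addm_negm_right[OF cmp_hom[OF y2 f]] by simp
  then have "addm C y1 (negm C y2) = zerm C T X" using trivial_kernel addm_hom[OF y1 n] by blast
  then show "y1 = y2" using negm_unique[OF y1 n] negm_negm[OF y2] by simp
qed

lemma epi_cmp:
  assumes f: "f \<in> hom C X Y" and g: "g \<in> hom C Y Z" and "is_epi C f" and "is_epi C g"
  shows "is_epi C (cmp C g f)"
proof (rule epiI[OF cmp_hom[OF f g]])
  fix T x y assume x: "x \<in> hom C Z T" and y: "y \<in> hom C Z T"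
    and "cmp C x (cmp C g f) = cmp C y (cmp C g f)"
  then have "cmp C (cmp C x g) f = cmp C (cmp C y g) f" using cmp_assoc[OF f g] by simp
  then have "cmp C x g = cmp C y g" by (rule epiD[OF \<open>is_epi C f\<close> f cmp_hom[OF g x] cmp_hom[OF g y]])
  then show "x = y" using epiD[OF \<open>is_epi C g\<close> g x y] by simp
qed

lemma epi_cmp_cancel:
  assumes f: "f \<in> hom C X Y" and g: "g \<in> hom C Y Z" and epi: "is_epi C (cmp C g f)"
  shows "is_epi C g"
proof (rule epiI[OF g])
  fix T x y assume x: "x \<in> hom C Z T" and y: "y \<in> hom C Z T" and "cmp C x g = cmp C y g"
  then have "cmp C x (cmp C g f) = cmp C y (cmp C g f)" using cmp_assoc[OF f g] by metis
  then show "x = y" by (rule epiD[OF epi cmp_hom[OF f g] x y])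
qed

lemma mono_cmp:
  assumes f: "f \<in> hom C X Y" and g: "g \<in> hom C Y Z" and "is_mono C f" and "is_mono C g"
  shows "is_mono C (cmp C g f)"
proof (rule monoI[OF cmp_hom[OF f g]])
  fix T x y assume x: "x \<in> hom C T X" and y: "y \<in> hom C T X"
    and "cmp C (cmp C g f) x = cmp C (cmp C g f) y"
  then have "cmp C g (cmp C f x) = cmp C g (cmp C f y)" using cmp_assoc[OF _ f g] by metis
  then have "cmp C f x = cmp C f y" by (rule monoD[OF \<open>is_mono C g\<close> g cmp_hom[OF x f] cmp_hom[OF y f]])
  then show "x = y" using monoD[OF \<open>is_mono C f\<close> f x y] by simp
qed

lemma mono_cmp_cancel:
  assumes f: "f \<in> hom C X Y" and g: "g \<in> hom C Y Z" and mono: "is_mono C (cmp C g f)"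
  shows "is_mono C f"
proof (rule monoI[OF f])
  fix T x y assume x: "x \<in> hom C T X" and y: "y \<in> hom C T X" and "cmp C f x = cmp C f y"
  then have "cmp C (cmp C g f) x = cmp C (cmp C g f) y" using cmp_assoc[OF _ f g] by metis
  then show "x = y" by (rule monoD[OF mono cmp_hom[OF f g] x y])
qed

lemma kernel_homs:
  assumes "is_kernel C k g"
  shows "k \<in> hom C (Dom C k) (Cod C k)" and "g \<in> hom C (Cod C k) (Cod C g)"
proof -
  obtain K B D where k: "k \<in> hom C K B" and g: "g \<in> hom C B D"
    using assms unfolding is_kernel_def by blast
  then show "k \<in> hom C (Dom C k) (Cod C k)" and "g \<in> hom C (Cod C k) (Cod C g)"
    using homD(2,3)[OF k] homD(3)[OF g] by simp_all
qed

lemma kernel_universal: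
  assumes "is_kernel C k g" and "k \<in> hom C K B" and "g \<in> hom C B D"
  shows "cmp C g k = zerm C K D"
    and "\<And>T t. t \<in> hom C T B \<Longrightarrow> cmp C g t = zerm C T D \<Longrightarrow>
           \<exists>!u. u \<in> hom C T K \<and> cmp C k u = t"
proof -
  obtain K' B' D' where "k \<in> hom C K' B'" "g \<in> hom C B' D'" "cmp C g k = zerm C K' D'"
    "\<forall>T t. t \<in> hom C T B' \<and> cmp C g t = zerm C T D' \<longrightarrow> (\<exists>!u. u \<in> hom C T K' \<and> cmp C k u = t)"
    using assms(1) unfolding is_kernel_def by blast
  moreover have "K' = K" "B' = B" "D' = D"
    using homD(2,3)[OF assms(2)] homD(3)[OF assms(3)] homD(2,3)[OF calculation(1)] homD(3)[OF calculation(2)]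
    by simp_all
  ultimately show "cmp C g k = zerm C K D"
    and "\<And>T t. t \<in> hom C T B \<Longrightarrow> cmp C g t = zerm C T D \<Longrightarrow>
           \<exists>!u. u \<in> hom C T K \<and> cmp C k u = t" by auto
qed

lemma kernel_factor:
  assumes "is_kernel C k g" and "k \<in> hom C K B" and "g \<in> hom C B D"
    and "t \<in> hom C T B" and "cmp C g t = zerm C T D"
  obtains u where "u \<in> hom C T K" and "cmp C k u = t"
  using kernel_universal(2)[OF assms] by blast

lemma kernel_mono:
  assumes kernel: "is_kernel C k g" and k: "k \<in> hom C K B" and g: "g \<in> hom C B D"
  shows "is_mono C k"
proof (rule monoI[OF k])
  fix T x y assume x: "x \<in> hom C T K" and y: "y \<in> hom C T K" and eq: "cmp C k x = cmp C k y"
  have "cmp C g (cmp C k x) = zerm C T D"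
    using cmp_assoc[OF x k g] kernel_universal(1)[OF kernel k g] cmp_zerm_left[OF x homD(5)[OF g]]
    by simp
  then have "\<exists>!u. u \<in> hom C T K \<and> cmp C k u = cmp C k x"
    using kernel_universal(2)[OF kernel k g cmp_hom[OF x k]] by blast
  then show "x = y" using x y eq by (metis the1_equality)
qed

lemma kernelI:
  assumes k: "k \<in> hom C K B" and g: "g \<in> hom C B D" and "cmp C g k = zerm C K D"
    and "is_mono C k"
    and factor: "\<And>T t. t \<in> hom C T B \<Longrightarrow> cmp C g t = zerm C T D \<Longrightarrow>
                   \<exists>u. u \<in> hom C T K \<and> cmp C k u = t"
  shows "is_kernel C k g"
  unfolding is_kernel_def
proof (intro exI conjI allI impI)
  fix T t assume "t \<in> hom C T B \<and> cmp C g t = zerm C T D"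
  then obtain u where "u \<in> hom C T K" "cmp C k u = t" using factor by blast
  then show "\<exists>!u. u \<in> hom C T K \<and> cmp C k u = t"
    using monoD[OF \<open>is_mono C k\<close> k] by blast
qed (use assms in auto)

lemma cokernel_homs:
  assumes "is_cokernel C c f"
  shows "f \<in> hom C (Dom C f) (Cod C f)" and "c \<in> hom C (Cod C f) (Cod C c)"
proof -
  obtain A B Q where f: "f \<in> hom C A B" and c: "c \<in> hom C B Q"
    using assms unfolding is_cokernel_def by blast
  then show "f \<in> hom C (Dom C f) (Cod C f)" and "c \<in> hom C (Cod C f) (Cod C c)"
    using homD(2,3)[OF f] homD(3)[OF c] by simp_all
qed

lemma cokernel_universal:
  assumes "is_cokernel C c f" and "f \<in> hom C A B" and "c \<in> hom C B Q"
  shows "cmp C c f = zerm C A Q"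
    and "\<And>T t. t \<in> hom C B T \<Longrightarrow> cmp C t f = zerm C A T \<Longrightarrow>
           \<exists>!u. u \<in> hom C Q T \<and> cmp C u c = t"
proof -
  obtain A' B' Q' where "f \<in> hom C A' B'" "c \<in> hom C B' Q'" "cmp C c f = zerm C A' Q'"
    "\<forall>T t. t \<in> hom C B' T \<and> cmp C t f = zerm C A' T \<longrightarrow> (\<exists>!u. u \<in> hom C Q' T \<and> cmp C u c = t)"
    using assms(1) unfolding is_cokernel_def by blast
  moreover have "A' = A" "B' = B" "Q' = Q"
    using homD(2,3)[OF assms(2)] homD(3)[OF assms(3)] homD(2,3)[OF calculation(1)] homD(3)[OF calculation(2)]
    by simp_all
  ultimately show "cmp C c f = zerm C A Q"
    and "\<And>T t. t \<in> hom C B T \<Longrightarrow> cmp C t f = zerm C A T \<Longrightarrow>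
           \<exists>!u. u \<in> hom C Q T \<and> cmp C u c = t" by auto
qed

lemma cokernel_factor:
  assumes "is_cokernel C c f" and "f \<in> hom C A B" and "c \<in> hom C B Q"
    and "t \<in> hom C B T" and "cmp C t f = zerm C A T"
  obtains u where "u \<in> hom C Q T" and "cmp C u c = t"
  using cokernel_universal(2)[OF assms] by blast

lemma cokernel_epi:
  assumes cokernel: "is_cokernel C c f" and f: "f \<in> hom C A B" and c: "c \<in> hom C B Q"
  shows "is_epi C c"
proof (rule epiI[OF c])
  fix T x y assume x: "x \<in> hom C Q T" and y: "y \<in> hom C Q T" and eq: "cmp C x c = cmp C y c"
  have "cmp C (cmp C x c) f = zerm C A T"
    using cmp_assoc[OF f c x] cokernel_universal(1)[OF cokernel f c] cmp_zerm_right[OF x homD(4)[OF f]]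
    by simp
  then have "\<exists>!u. u \<in> hom C Q T \<and> cmp C u c = cmp C x c"
    using cokernel_universal(2)[OF cokernel f c cmp_hom[OF c x]] by blast
  then show "x = y" using x y eq by (metis the1_equality)
qed

lemma cokernelI:
  assumes f: "f \<in> hom C A B" and c: "c \<in> hom C B Q" and "cmp C c f = zerm C A Q"
    and "is_epi C c"
    and factor: "\<And>T t. t \<in> hom C B T \<Longrightarrow> cmp C t f = zerm C A T \<Longrightarrow>
                   \<exists>u. u \<in> hom C Q T \<and> cmp C u c = t"
  shows "is_cokernel C c f"
  unfolding is_cokernel_def
proof (intro exI conjI allI impI)
  fix T t assume "t \<in> hom C B T \<and> cmp C t f = zerm C A T"
  then obtain u where "u \<in> hom C Q T" "cmp C u c = t" using factor by blast
  then show "\<exists>!u. u \<in> hom C Q T \<and> cmp C u c = t"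
    using epiD[OF \<open>is_epi C c\<close> c] by blast
qed (use assms in auto)

lemma isoI:
  assumes f: "f \<in> hom C X Y" and "g \<in> hom C Y X"
    and "cmp C g f = idt C X" and "cmp C f g = idt C Y"
  shows "is_iso C f"
  using assms homD(1,2,3)[OF f] unfolding is_iso_def by auto

lemma is_iso_idt: "X \<in> Ob C \<Longrightarrow> is_iso C (idt C X)"
  by (metis isoI idt_hom cmp_idt_left)

lemma kernels_iso:
  assumes m_kernel: "is_kernel C m e" and f_kernel: "is_kernel C f e"
    and m: "m \<in> hom C I W" and f: "f \<in> hom C I' W" and e: "e \<in> hom C W Q"
  obtains \<alpha> where "\<alpha> \<in> hom C I I'" and "is_iso C \<alpha>" and "cmp C f \<alpha> = m"
proof -
  obtain \<alpha> where \<alpha>: "\<alpha> \<in> hom C I I'" and f\<alpha>: "cmp C f \<alpha> = m"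
    using kernel_factor[OF f_kernel f e m kernel_universal(1)[OF m_kernel m e]] .
  obtain \<beta> where \<beta>: "\<beta> \<in> hom C I' I" and m\<beta>: "cmp C m \<beta> = f"
    using kernel_factor[OF m_kernel m e f kernel_universal(1)[OF f_kernel f e]] .
  have "cmp C f (cmp C \<alpha> \<beta>) = cmp C f (idt C I')"
    using cmp_assoc[OF \<beta> \<alpha> f] f\<alpha> m\<beta> cmp_idt_right[OF f] by simp
  then have \<alpha>\<beta>: "cmp C \<alpha> \<beta> = idt C I'"
    using monoD[OF kernel_mono[OF f_kernel f e] f cmp_hom[OF \<beta> \<alpha>] idt_hom[OF homD(4)[OF f]]] by simp
  have "cmp C m (cmp C \<beta> \<alpha>) = cmp C m (idt C I)"
    using cmp_assoc[OF \<alpha> \<beta> m] f\<alpha> m\<beta> cmp_idt_right[OF m] by simp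
  then have \<beta>\<alpha>: "cmp C \<beta> \<alpha> = idt C I"
    using monoD[OF kernel_mono[OF m_kernel m e] m cmp_hom[OF \<alpha> \<beta>] idt_hom[OF homD(4)[OF m]]] by simp
  show thesis using that[OF \<alpha> isoI[OF \<alpha> \<beta> \<beta>\<alpha> \<alpha>\<beta>] f\<alpha>] .
qed

lemma cokernels_iso:
  assumes e_cokernel: "is_cokernel C e m" and h_cokernel: "is_cokernel C h m"
    and m: "m \<in> hom C I W" and e: "e \<in> hom C W Q" and h: "h \<in> hom C W Q'"
  obtains \<gamma> where "\<gamma> \<in> hom C Q Q'" and "is_iso C \<gamma>" and "cmp C \<gamma> e = h"
proof -
  obtain \<gamma> where \<gamma>: "\<gamma> \<in> hom C Q Q'" and \<gamma>e: "cmp C \<gamma> e = h"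
    using cokernel_factor[OF e_cokernel m e h cokernel_universal(1)[OF h_cokernel m h]] .
  obtain \<delta> where \<delta>: "\<delta> \<in> hom C Q' Q" and \<delta>h: "cmp C \<delta> h = e"
    using cokernel_factor[OF h_cokernel m h e cokernel_universal(1)[OF e_cokernel m e]] .
  have "cmp C (cmp C \<gamma> \<delta>) h = cmp C (idt C Q') h"
    using cmp_assoc[OF h \<delta> \<gamma>] \<gamma>e \<delta>h cmp_idt_left[OF h] by simp
  then have \<gamma>\<delta>: "cmp C \<gamma> \<delta> = idt C Q'"
    using epiD[OF cokernel_epi[OF h_cokernel m h] h cmp_hom[OF \<delta> \<gamma>] idt_hom[OF homD(5)[OF h]]] by simp
  have "cmp C (cmp C \<delta> \<gamma>) e = cmp C (idt C Q) e"
    using cmp_assoc[OF e \<gamma> \<delta>] \<gamma>e \<delta>h cmp_idt_left[OF e] by simp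
  then have \<delta>\<gamma>: "cmp C \<delta> \<gamma> = idt C Q"
    using epiD[OF cokernel_epi[OF e_cokernel m e] e cmp_hom[OF \<gamma> \<delta>] idt_hom[OF homD(5)[OF e]]] by simp
  show thesis using that[OF \<gamma> isoI[OF \<gamma> \<delta> \<delta>\<gamma> \<gamma>\<delta>] \<gamma>e] .
qed

lemma kernel_epi_inverse:
  assumes kernel: "is_kernel C i g" and i: "i \<in> hom C A Y" and g: "g \<in> hom C Y G"
    and "is_epi C i"
  obtains u where "u \<in> hom C Y A" and "cmp C i u = idt C Y" and "cmp C u i = idt C A"
proof -
  have G: "G \<in> Ob C" and Y: "Y \<in> Ob C" and A: "A \<in> Ob C" using homD(4,5) g i by blast+
  have "cmp C g i = cmp C (zerm C Y G) i"
    using kernel_universal(1)[OF kernel i g] cmp_zerm_left[OF i G] by simp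
  then have "g = zerm C Y G" using epiD[OF \<open>is_epi C i\<close> i g zerm_hom[OF Y G]] by simp
  then have "cmp C g (idt C Y) = zerm C Y G" using cmp_idt_right[OF g] by simp
  then obtain u where u: "u \<in> hom C Y A" and iu: "cmp C i u = idt C Y"
    using kernel_factor[OF kernel i g idt_hom[OF Y]] by blast
  have "cmp C i (cmp C u i) = cmp C i (idt C A)"
    using cmp_assoc[OF i u i] iu cmp_idt_left[OF i] cmp_idt_right[OF i] by simp
  then have "cmp C u i = idt C A"
    using monoD[OF kernel_mono[OF kernel i g] i cmp_hom[OF i u] idt_hom[OF A]] by simp
  then show thesis using that u iu by blast
qed

lemma cokernel_cmp_iso:
  assumes cokernel: "is_cokernel C d f" and f: "f \<in> hom C F X" and d: "d \<in> hom C X A"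
    and i: "i \<in> hom C A Y" and u: "u \<in> hom C Y A"
    and ui: "cmp C u i = idt C A" and iu: "cmp C i u = idt C Y"
  shows "is_cokernel C (cmp C i d) f"
proof (rule cokernelI[OF f cmp_hom[OF d i]])
  show "cmp C (cmp C i d) f = zerm C F Y"
    using cmp_assoc[OF f d i] cokernel_universal(1)[OF cokernel f d] cmp_zerm_right[OF i homD(4)[OF f]]
    by simp
  have "is_epi C i"
  proof (rule epiI[OF i])
    fix T x y assume x: "x \<in> hom C Y T" and y: "y \<in> hom C Y T" and "cmp C x i = cmp C y i"
    then have "cmp C (cmp C x i) u = cmp C (cmp C y i) u" by simp
    then show "x = y" using cmp_assoc[OF u i x] cmp_assoc[OF u i y] iu cmp_idt_right x y by metis
  qed
  then show "is_epi C (cmp C i d)" using epi_cmp[OF d i cokernel_epi[OF cokernel f d]] by simp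
  fix T t assume t: "t \<in> hom C X T" and "cmp C t f = zerm C F T"
  then obtain v where v: "v \<in> hom C A T" and vd: "cmp C v d = t"
    using cokernel_factor[OF cokernel f d] by blast
  have "cmp C (cmp C v u) (cmp C i d) = cmp C (cmp C v (cmp C u i)) d"
    using cmp_assoc[OF d i cmp_hom[OF u v]] cmp_assoc[OF i u v] by simp
  then have "cmp C (cmp C v u) (cmp C i d) = t" using ui cmp_idt_right[OF v] vd by simp
  then show "\<exists>w. w \<in> hom C Y T \<and> cmp C w (cmp C i d) = t" using cmp_hom[OF u v] by blast
qed

lemma pushout_hom:
  assumes "is_pushout C a b a' b'" and a: "a \<in> hom C X D"
  shows "b' \<in> hom C D (Cod C b')"
proof -
  obtain X' D' P where "a \<in> hom C X' D'" and "b' \<in> hom C D' P"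
    using assms(1) unfolding is_pushout_def by blast
  then show ?thesis using homD(3)[OF a] homD(3) by metis
qed

lemma pushoutD:
  assumes "is_pushout C a b a' b'" and a: "a \<in> hom C X D" and b: "b \<in> hom C X A"
    and b': "b' \<in> hom C D P"
  shows "a' \<in> hom C A P" and "cmp C b' a = cmp C a' b"
    and "\<And>S x y. x \<in> hom C D S \<Longrightarrow> y \<in> hom C A S \<Longrightarrow> cmp C x a = cmp C y b \<Longrightarrow>
           \<exists>!u. u \<in> hom C P S \<and> cmp C u b' = x \<and> cmp C u a' = y"
proof -
  obtain X' D' A' P' where h: "a \<in> hom C X' D'" "b \<in> hom C X' A'" "b' \<in> hom C D' P'"
    "a' \<in> hom C A' P'" "cmp C b' a = cmp C a' b"
    "\<forall>S x y. x \<in> hom C D' S \<and> y \<in> hom C A' S \<and> cmp C x a = cmp C y b \<longrightarrow>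
        (\<exists>!u. u \<in> hom C P' S \<and> cmp C u b' = x \<and> cmp C u a' = y)"
    using assms(1) unfolding is_pushout_def by blast
  moreover have "D' = D" "A' = A" "P' = P"
    using homD(3)[OF a] homD(3)[OF b] homD(3)[OF b'] homD(3)[OF h(1)] homD(3)[OF h(2)] homD(3)[OF h(3)]
    by simp_all
  ultimately show "a' \<in> hom C A P" and "cmp C b' a = cmp C a' b"
    and "\<And>S x y. x \<in> hom C D S \<Longrightarrow> y \<in> hom C A S \<Longrightarrow> cmp C x a = cmp C y b \<Longrightarrow>
           \<exists>!u. u \<in> hom C P S \<and> cmp C u b' = x \<and> cmp C u a' = y"
    by auto
qed

lemma pullback_kernel_square:
  assumes a_kernel: "is_kernel C a c" and a: "a \<in> hom C U V" and c: "c \<in> hom C V B"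
    and p: "p \<in> hom C V P" and r: "r \<in> hom C P B" and m: "m \<in> hom C I P" and w: "w \<in> hom C U I"
    and "is_mono C m" and rp: "cmp C r p = c" and rm: "cmp C r m = zerm C I B"
    and mw: "cmp C m w = cmp C p a"
  shows "is_pullback C p m a w"
proof -
  have "\<exists>!u. u \<in> hom C S U \<and> cmp C a u = x \<and> cmp C w u = y"
    if x: "x \<in> hom C S V" and y: "y \<in> hom C S I" and pxy: "cmp C p x = cmp C m y" for S x y
  proof -
    have "cmp C c x = cmp C (cmp C r m) y"
      using cmp_assoc[OF x p r] rp pxy cmp_assoc[OF y m r] by simp
    then have "cmp C c x = zerm C S B" using rm cmp_zerm_left[OF y homD(5)[OF c]] by simp
    then obtain z where z: "z \<in> hom C S U" and az: "cmp C a z = x"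
      using kernel_factor[OF a_kernel a c x] by blast
    have "cmp C m (cmp C w z) = cmp C m y"
      using cmp_assoc[OF z w m] mw cmp_assoc[OF z a p] az pxy by simp
    then have wz: "cmp C w z = y" using monoD[OF \<open>is_mono C m\<close> m cmp_hom[OF z w] y] by simp
    show ?thesis
    proof (rule ex1I[of _ z])
      fix v assume "v \<in> hom C S U \<and> cmp C a v = x \<and> cmp C w v = y"
      then show "v = z" using monoD[OF kernel_mono[OF a_kernel a c] a _ z] az by auto
    qed (use z az wz in simp)
  qed
  then show ?thesis
    unfolding is_pullback_def
    by (intro exI[of _ V] exI[of _ P] exI[of _ I] exI[of _ U]) (use p m a w mw in auto)
qed

lemma kernel_cmp_of_factorization:
  assumes a_kernel: "is_kernel C a c" and k_kernel: "is_kernel C k b" and l_kernel: "is_kernel C l d"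
    and a: "a \<in> hom C U V" and c: "c \<in> hom C V A" and k: "k \<in> hom C B V" and b: "b \<in> hom C V W"
    and d: "d \<in> hom C B D" and i: "i \<in> hom C D A" and l: "l \<in> hom C K B"
    and "is_mono C i" and ck: "cmp C c k = cmp C i d"
  obtains j where "j \<in> hom C K U" and "is_kernel C j (cmp C b a)"
proof -
  have K: "K \<in> Ob C" and A: "A \<in> Ob C" and W: "W \<in> Ob C" and D: "D \<in> Ob C"
    using homD(4) l homD(5) c b d by blast+
  have "cmp C c (cmp C k l) = cmp C i (cmp C d l)"
    using cmp_assoc[OF l k c] ck cmp_assoc[OF l d i] by simp
  then have "cmp C c (cmp C k l) = zerm C K A"
    using kernel_universal(1)[OF l_kernel l d] cmp_zerm_right[OF i K] by simp
  then obtain j where j: "j \<in> hom C K U" and aj: "cmp C a j = cmp C k l"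
    using kernel_factor[OF a_kernel a c cmp_hom[OF l k]] by blast
  have "is_kernel C j (cmp C b a)"
  proof (rule kernelI[OF j cmp_hom[OF a b]])
    show "cmp C (cmp C b a) j = zerm C K W"
      using cmp_assoc[OF j a b] aj cmp_assoc[OF l k b] kernel_universal(1)[OF k_kernel k b]
        cmp_zerm_left[OF l W] by simp
    have "is_mono C (cmp C a j)"
      using aj mono_cmp[OF l k kernel_mono[OF l_kernel l d] kernel_mono[OF k_kernel k b]] by simp
    then show "is_mono C j" using mono_cmp_cancel[OF j a] by simp
    fix T t assume t: "t \<in> hom C T U" and "cmp C (cmp C b a) t = zerm C T W"
    then have "cmp C b (cmp C a t) = zerm C T W" using cmp_assoc[OF t a b] by simp
    then obtain s where s: "s \<in> hom C T B" and ks: "cmp C k s = cmp C a t"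
      using kernel_factor[OF k_kernel k b cmp_hom[OF t a]] by blast
    have T: "T \<in> Ob C" using homD(4)[OF t] .
    have "cmp C i (cmp C d s) = cmp C (cmp C c a) t"
      using cmp_assoc[OF s d i] ck cmp_assoc[OF s k c] ks cmp_assoc[OF t a c] by simp
    also have "\<dots> = cmp C i (zerm C T D)"
      using kernel_universal(1)[OF a_kernel a c] cmp_zerm_left[OF t A] cmp_zerm_right[OF i T] by simp
    finally have "cmp C d s = zerm C T D"
      using monoD[OF \<open>is_mono C i\<close> i cmp_hom[OF s d] zerm_hom[OF T D]] by simp
    then obtain u where u: "u \<in> hom C T K" and lu: "cmp C l u = s"
      using kernel_factor[OF l_kernel l d s] by blast
    have "cmp C a (cmp C j u) = cmp C a t"
      using cmp_assoc[OF u j a] aj cmp_assoc[OF u l k] lu ks by simp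
    then have "cmp C j u = t"
      using monoD[OF kernel_mono[OF a_kernel a c] a cmp_hom[OF u j] t] by simp
    then show "\<exists>u. u \<in> hom C T K \<and> cmp C j u = t" using u by blast
  qed
  then show thesis using that j by blast
qed

lemma cokernel_cmp_of_factorization:
  assumes c_cokernel: "is_cokernel C c a" and b_cokernel: "is_cokernel C b k"
    and q_cokernel: "is_cokernel C q i"
    and a: "a \<in> hom C U V" and c: "c \<in> hom C V A" and k: "k \<in> hom C B V" and b: "b \<in> hom C V W"
    and d: "d \<in> hom C B D" and i: "i \<in> hom C D A" and q: "q \<in> hom C A Q"
    and "is_epi C d" and ck: "cmp C c k = cmp C i d"
  obtains e where "e \<in> hom C W Q" and "cmp C e b = cmp C q c" and "is_cokernel C e (cmp C b a)"
proof -
  have Q: "Q \<in> Ob C" and U: "U \<in> Ob C" and B: "B \<in> Ob C" and D: "D \<in> Ob C"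
    using homD(5) q homD(4) a k d by blast+
  have "cmp C (cmp C q c) k = cmp C (cmp C q i) d"
    using cmp_assoc[OF k c q] ck cmp_assoc[OF d i q] by simp
  then have "cmp C (cmp C q c) k = zerm C B Q"
    using cokernel_universal(1)[OF q_cokernel i q] cmp_zerm_left[OF d Q] by simp
  then obtain e where e: "e \<in> hom C W Q" and eb: "cmp C e b = cmp C q c"
    using cokernel_factor[OF b_cokernel k b cmp_hom[OF c q]] by blast
  have "is_cokernel C e (cmp C b a)"
  proof (rule cokernelI[OF cmp_hom[OF a b] e])
    show "cmp C e (cmp C b a) = zerm C U Q"
      using cmp_assoc[OF a b e] eb cmp_assoc[OF a c q] cokernel_universal(1)[OF c_cokernel a c]
        cmp_zerm_right[OF q U] by simp
    have "is_epi C (cmp C e b)"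
      using eb epi_cmp[OF c q cokernel_epi[OF c_cokernel a c] cokernel_epi[OF q_cokernel i q]] by simp
    then show "is_epi C e" using epi_cmp_cancel[OF b e] by simp
    fix T t assume t: "t \<in> hom C W T" and "cmp C t (cmp C b a) = zerm C U T"
    then have "cmp C (cmp C t b) a = zerm C U T" using cmp_assoc[OF a b t] by simp
    then obtain s where s: "s \<in> hom C A T" and sc: "cmp C s c = cmp C t b"
      using cokernel_factor[OF c_cokernel a c cmp_hom[OF b t]] by blast
    have T: "T \<in> Ob C" using homD(5)[OF t] .
    have "cmp C (cmp C s i) d = cmp C t (cmp C b k)"
      using cmp_assoc[OF d i s] ck cmp_assoc[OF k c s] sc cmp_assoc[OF k b t] by simp
    also have "\<dots> = cmp C (zerm C D T) d"
      using cokernel_universal(1)[OF b_cokernel k b] cmp_zerm_right[OF t B] cmp_zerm_left[OF d T] by simp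
    finally have "cmp C s i = zerm C D T"
      using epiD[OF \<open>is_epi C d\<close> d cmp_hom[OF i s] zerm_hom[OF D T]] by simp
    then obtain u where u: "u \<in> hom C Q T" and uq: "cmp C u q = s"
      using cokernel_factor[OF q_cokernel i q s] by blast
    have "cmp C (cmp C u e) b = cmp C t b"
      using cmp_assoc[OF b e u] eb cmp_assoc[OF c q u] uq sc by simp
    then have "cmp C u e = t"
      using epiD[OF cokernel_epi[OF b_cokernel k b] b cmp_hom[OF e u] t] by simp
    then show "\<exists>u. u \<in> hom C Q T \<and> cmp C u e = t" using u by blast
  qed
  then show thesis using that e eb by blast
qed

lemma cokernel_pushout:
  assumes pushout: "is_pushout C k d n p" and b_cokernel: "is_cokernel C b k"
    and k: "k \<in> hom C X V" and b: "b \<in> hom C V W" and d: "d \<in> hom C X A" and p: "p \<in> hom C V P"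
  obtains s where "s \<in> hom C P W" and "cmp C s p = b" and "is_cokernel C s n"
proof -
  note n = pushoutD(1)[OF pushout k d p] and pk = pushoutD(2)[OF pushout k d p]
    and universal = pushoutD(3)[OF pushout k d p]
  have A: "A \<in> Ob C" and W: "W \<in> Ob C" using homD(5) d b by blast+
  have "cmp C b k = cmp C (zerm C A W) d"
    using cokernel_universal(1)[OF b_cokernel k b] cmp_zerm_left[OF d W] by simp
  then obtain s where s: "s \<in> hom C P W" and sp: "cmp C s p = b" and sn: "cmp C s n = zerm C A W"
    using ex1_implies_ex[OF universal[OF b zerm_hom[OF A W]]] by blast
  have "is_cokernel C s n"
  proof (rule cokernelI[OF n s sn])
    show "is_epi C s" using sp epi_cmp_cancel[OF p s] cokernel_epi[OF b_cokernel k b] by simp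
    fix T t assume t: "t \<in> hom C P T" and tn: "cmp C t n = zerm C A T"
    have tpk: "cmp C (cmp C t p) k = cmp C (cmp C t n) d"
      using cmp_assoc[OF k p t] pk cmp_assoc[OF d n t] by simp
    then have "cmp C (cmp C t p) k = zerm C X T" using tn cmp_zerm_left[OF d homD(5)[OF t]] by simp
    then obtain u where u: "u \<in> hom C W T" and ub: "cmp C u b = cmp C t p"
      using cokernel_factor[OF b_cokernel k b cmp_hom[OF p t]] by blast
    have "cmp C (cmp C u s) p = cmp C t p" using cmp_assoc[OF p s u] sp ub by simp
    moreover have "cmp C (cmp C u s) n = cmp C t n"
      using cmp_assoc[OF n s u] sn cmp_zerm_right[OF u A] tn by simp
    ultimately have "cmp C u s = t"
      using universal[OF cmp_hom[OF p t] cmp_hom[OF n t] tpk] cmp_hom[OF s u] t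
      by (metis the1_equality)
    then show "\<exists>u. u \<in> hom C W T \<and> cmp C u s = t" using u by blast
  qed
  then show thesis using that s sp by blast
qed

lemma mono_cmp_of_kernels:
  assumes n_kernel: "is_kernel C n s" and n: "n \<in> hom C A P" and s: "s \<in> hom C P W"
    and m: "m \<in> hom C I P" and r: "r \<in> hom C P B"
    and "is_mono C m" and rm: "cmp C r m = zerm C I B" and "is_mono C (cmp C r n)"
  shows "is_mono C (cmp C s m)"
proof (rule monoI_zerm[OF cmp_hom[OF m s]])
  fix T y assume y: "y \<in> hom C T I" and "cmp C (cmp C s m) y = zerm C T W"
  then have "cmp C s (cmp C m y) = zerm C T W" using cmp_assoc[OF y m s] by simp
  then obtain z where z: "z \<in> hom C T A" and nz: "cmp C n z = cmp C m y"
    using kernel_factor[OF n_kernel n s cmp_hom[OF y m]] by blast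
  have T: "T \<in> Ob C" and A: "A \<in> Ob C" using homD(4)[OF y] homD(4)[OF n] .
  have "cmp C (cmp C r n) z = cmp C (cmp C r m) y"
    using cmp_assoc[OF z n r] nz cmp_assoc[OF y m r] by simp
  also have "\<dots> = cmp C (cmp C r n) (zerm C T A)"
    using rm cmp_zerm_left[OF y homD(5)[OF r]] cmp_zerm_right[OF cmp_hom[OF n r] T] by simp
  finally have "z = zerm C T A"
    using monoD[OF \<open>is_mono C (cmp C r n)\<close> cmp_hom[OF n r] z zerm_hom[OF T A]] by simp
  then have "cmp C m y = cmp C m (zerm C T I)"
    using nz cmp_zerm_right[OF n T] cmp_zerm_right[OF m T] by simp
  then show "y = zerm C T I" using monoD[OF \<open>is_mono C m\<close> m y zerm_hom[OF T homD(4)[OF m]]] by simp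
qed

lemma mono_factor_through_cokernel:
  assumes \<sigma>_cokernel: "is_cokernel C \<sigma> \<kappa>" and \<kappa>: "\<kappa> \<in> hom C N T'" and \<sigma>: "\<sigma> \<in> hom C T' T"
    and f: "f \<in> hom C I W" and "is_mono C f" and t: "t \<in> hom C T W"
    and y': "y' \<in> hom C T' I" and fy': "cmp C f y' = cmp C t \<sigma>"
  obtains y where "y \<in> hom C T I" and "cmp C f y = t"
proof -
  have N: "N \<in> Ob C" and I: "I \<in> Ob C" using homD(4)[OF \<kappa>] homD(4)[OF f] .
  have "cmp C f (cmp C y' \<kappa>) = cmp C t (cmp C \<sigma> \<kappa>)"
    using cmp_assoc[OF \<kappa> y' f] fy' cmp_assoc[OF \<kappa> \<sigma> t] by simp
  also have "\<dots> = cmp C f (zerm C N I)"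
    using cokernel_universal(1)[OF \<sigma>_cokernel \<kappa> \<sigma>] cmp_zerm_right[OF t N] cmp_zerm_right[OF f N] by simp
  finally have "cmp C y' \<kappa> = zerm C N I"
    using monoD[OF \<open>is_mono C f\<close> f cmp_hom[OF \<kappa> y'] zerm_hom[OF N I]] by simp
  then obtain y where y: "y \<in> hom C T I" and y\<sigma>: "cmp C y \<sigma> = y'"
    using cokernel_factor[OF \<sigma>_cokernel \<kappa> \<sigma> y'] by blast
  have "cmp C (cmp C f y) \<sigma> = cmp C t \<sigma>" using cmp_assoc[OF \<sigma> y f] y\<sigma> fy' by simp
  then have "cmp C f y = t"
    using epiD[OF cokernel_epi[OF \<sigma>_cokernel \<kappa> \<sigma>] \<sigma> cmp_hom[OF y f] t] by simp
  then show thesis using that y by blast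
qed

lemma factor_through_kernel_modulo:
  assumes m_kernel: "is_kernel C m r" and m: "m \<in> hom C I P" and r: "r \<in> hom C P B"
    and n: "n \<in> hom C A P" and s: "s \<in> hom C P W" and sn: "cmp C s n = zerm C A W"
    and x: "x \<in> hom C T P" and z: "z \<in> hom C T A" and rx: "cmp C r x = cmp C r (cmp C n z)"
  obtains y where "y \<in> hom C T I" and "cmp C s (cmp C m y) = cmp C s x"
proof -
  define nz where "nz = cmp C n z"
  have nz: "nz \<in> hom C T P" unfolding nz_def using cmp_hom[OF z n] .
  have T: "T \<in> Ob C" and W: "W \<in> Ob C" using homD(4)[OF x] homD(5)[OF s] .
  have diff: "addm C x (negm C nz) \<in> hom C T P" using addm_hom[OF x negm_hom[OF nz]] .
  have "cmp C r (addm C x (negm C nz)) = zerm C T B"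
    using cmp_addm_distrib_left[OF x negm_hom[OF nz] r] cmp_negm_right[OF nz r] rx
      addm_negm_right[OF cmp_hom[OF x r]] unfolding nz_def by simp
  then obtain y where y: "y \<in> hom C T I" and my: "cmp C m y = addm C x (negm C nz)"
    using kernel_factor[OF m_kernel m r diff] by blast
  have "cmp C s nz = zerm C T W"
    unfolding nz_def using cmp_assoc[OF z n s] sn cmp_zerm_left[OF z W] by simp
  then have "cmp C s (addm C x (negm C nz)) = cmp C s x"
    using cmp_addm_distrib_left[OF x negm_hom[OF nz] s] cmp_negm_right[OF nz s] negm_zerm[OF T W]
      addm_zerm_right[OF cmp_hom[OF x s]] by simp
  then show thesis using that y my by simp
qed

end

locale conflation_cat =
  fixes C :: "('o, 'm, 'x) addcat_scheme" and E :: "('m \<times> 'm) set"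
  assumes is_conflation_category: "conflation_category C E"

sublocale conflation_cat \<subseteq> preadditive_cat
  using is_conflation_category
  by unfold_locales (simp_all add: conflation_category_def additive_category_def)

context conflation_cat
begin

lemma conflation_kernel: "(f, g) \<in> E \<Longrightarrow> is_kernel C f g"
  and conflation_cokernel: "(f, g) \<in> E \<Longrightarrow> is_cokernel C g f"
  using is_conflation_category unfolding conflation_category_def kc_pair_def by auto

lemma conflation_hom_cokernel: "(f, g) \<in> E \<Longrightarrow> f \<in> hom C X Y \<Longrightarrow> g \<in> hom C Y (Cod C g)"
  using kernel_homs[OF conflation_kernel] homD(3) by metis

lemma conflation_hom_kernel: "(f, g) \<in> E \<Longrightarrow> g \<in> hom C Y Z \<Longrightarrow> f \<in> hom C (Dom C f) Y"
  using kernel_homs[OF conflation_kernel] homD(2) by metis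

lemma deflation_epi: "deflation C E g \<Longrightarrow> g \<in> hom C Y Z \<Longrightarrow> is_epi C g"
  unfolding deflation_def using cokernel_epi conflation_cokernel conflation_hom_kernel by metis

lemma conflation_iso_closed:
  assumes "(f, g) \<in> E" and "is_kernel C f' g'" and "is_cokernel C g' f'"
    and "is_iso C \<alpha>" and "is_iso C \<beta>" and "is_iso C \<gamma>"
    and "\<alpha> \<in> hom C (Dom C f) (Dom C f')" and "\<beta> \<in> hom C (Cod C f) (Cod C f')"
    and "\<gamma> \<in> hom C (Cod C g) (Cod C g')"
    and "cmp C f' \<alpha> = cmp C \<beta> f" and "cmp C g' \<beta> = cmp C \<gamma> g"
  shows "(f', g') \<in> E"
proof -
  have "\<forall>f g f' g' \<alpha> \<beta> \<gamma>. (f, g) \<in> E \<and> kc_pair C f' g' \<and>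
        is_iso C \<alpha> \<and> is_iso C \<beta> \<and> is_iso C \<gamma> \<and>
        \<alpha> \<in> hom C (Dom C f) (Dom C f') \<and> \<beta> \<in> hom C (Cod C f) (Cod C f') \<and>
        \<gamma> \<in> hom C (Cod C g) (Cod C g') \<and>
        cmp C f' \<alpha> = cmp C \<beta> f \<and> cmp C g' \<beta> = cmp C \<gamma> g \<longrightarrow> (f', g') \<in> E"
    using is_conflation_category unfolding conflation_category_def by (elim conjE)
  then show ?thesis using assms unfolding kc_pair_def by blast
qed

lemma conflation_replace_kernel:
  assumes me: "(m, e) \<in> E" and f_kernel: "is_kernel C f e"
  shows "(f, e) \<in> E"
proof -
  obtain I W Q where m: "m \<in> hom C I W" and e: "e \<in> hom C W Q"
    using kernel_homs[OF conflation_kernel[OF me]] by blast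
  have f: "f \<in> hom C (Dom C f) W"
    using kernel_homs(1)[OF f_kernel] homD(2)[OF e] homD(2)[OF kernel_homs(2)[OF f_kernel]] by simp
  obtain \<alpha> where \<alpha>: "\<alpha> \<in> hom C I (Dom C f)" and "is_iso C \<alpha>" and f\<alpha>: "cmp C f \<alpha> = m"
    using kernels_iso[OF conflation_kernel[OF me] f_kernel m f e] .
  have e_cokernel: "is_cokernel C e m" using conflation_cokernel[OF me] .
  have "is_cokernel C e f"
  proof (rule cokernelI[OF f e kernel_universal(1)[OF f_kernel f e] cokernel_epi[OF e_cokernel m e]])
    fix T t assume t: "t \<in> hom C W T" and "cmp C t f = zerm C (Dom C f) T"
    then have "cmp C t m = zerm C I T" using f\<alpha> cmp_assoc[OF \<alpha> f t] cmp_zerm_left[OF \<alpha> homD(5)[OF t]] by simp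
    then show "\<exists>u. u \<in> hom C Q T \<and> cmp C u e = t" using cokernel_factor[OF e_cokernel m e t] by metis
  qed
  moreover have W: "W \<in> Ob C" and Q: "Q \<in> Ob C" using homD(4,5)[OF e] by auto
  ultimately show ?thesis
    using conflation_iso_closed[OF me f_kernel _ \<open>is_iso C \<alpha>\<close> is_iso_idt[OF W] is_iso_idt[OF Q]]
      \<alpha> idt_hom[OF W] idt_hom[OF Q] homD(2,3)[OF m] homD(3)[OF e] homD(3)[OF f] f\<alpha>
      cmp_idt_left[OF m] cmp_idt_left[OF e] cmp_idt_right[OF e] by simp
qed

lemma conflation_replace_cokernel:
  assumes me: "(m, e) \<in> E" and h_cokernel: "is_cokernel C h m"
  shows "(m, h) \<in> E"
proof -
  obtain I W Q where m: "m \<in> hom C I W" and e: "e \<in> hom C W Q"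
    using kernel_homs[OF conflation_kernel[OF me]] by blast
  have h: "h \<in> hom C W (Cod C h)" using cokernel_homs(2)[OF h_cokernel] homD(3)[OF m] by simp
  obtain \<gamma> where \<gamma>: "\<gamma> \<in> hom C Q (Cod C h)" and "is_iso C \<gamma>" and \<gamma>e: "cmp C \<gamma> e = h"
    using cokernels_iso[OF conflation_cokernel[OF me] h_cokernel m e h] .
  have m_kernel: "is_kernel C m e" using conflation_kernel[OF me] .
  have "is_kernel C m h"
  proof (rule kernelI[OF m h cokernel_universal(1)[OF h_cokernel m h] kernel_mono[OF m_kernel m e]])
    fix T t assume t: "t \<in> hom C T W" and ht: "cmp C h t = zerm C T (Cod C h)"
    obtain \<delta> where \<delta>: "\<delta> \<in> hom C (Cod C h) Q" and "cmp C \<delta> h = e"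
      using cokernel_factor[OF h_cokernel m h e cokernel_universal(1)[OF conflation_cokernel[OF me] m e]] .
    then have "cmp C e t = zerm C T Q"
      using cmp_assoc[OF t h \<delta>] ht cmp_zerm_right[OF \<delta> homD(4)[OF t]] by simp
    then show "\<exists>u. u \<in> hom C T I \<and> cmp C m u = t" using kernel_factor[OF m_kernel m e t] by metis
  qed
  moreover have W: "W \<in> Ob C" and I: "I \<in> Ob C" using homD(4,5)[OF m] by auto
  ultimately show ?thesis
    using conflation_iso_closed[OF me _ h_cokernel is_iso_idt[OF I] is_iso_idt[OF W] \<open>is_iso C \<gamma>\<close>]
      \<gamma> idt_hom[OF W] idt_hom[OF I] homD(2,3)[OF m] homD(3)[OF e] homD(3)[OF h] \<gamma>e
      cmp_idt_left[OF m] cmp_idt_right[OF m] cmp_idt_right[OF h] by simp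
qed

end

locale deflation_exact_cat =
  fixes C :: "('o, 'm, 'x) addcat_scheme" and E :: "('m \<times> 'm) set"
  assumes is_deflation_exact: "deflation_exact C E"

sublocale deflation_exact_cat \<subseteq> conflation_cat
  using is_deflation_exact by unfold_locales (simp add: deflation_exact_def)

context deflation_exact_cat
begin

lemma deflation_pullback:
  assumes "deflation C E g" and g: "g \<in> hom C B D" and t: "t \<in> hom C T D"
  shows "\<exists>p q. is_pullback C g t p q"
    and "is_pullback C g t p q \<Longrightarrow> deflation C E q"
proof -
  have "\<forall>g t. deflation C E g \<and> t \<in> Ar C \<and> Cod C t = Cod C g \<longrightarrow>
        (\<exists>p q. is_pullback C g t p q) \<and> (\<forall>p q. is_pullback C g t p q \<longrightarrow> deflation C E q)"
    using is_deflation_exact unfolding deflation_exact_def by (elim conjE)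
  moreover have "t \<in> Ar C" "Cod C t = Cod C g" using homD(1,3) g t by metis+
  ultimately show "\<exists>p q. is_pullback C g t p q" and "is_pullback C g t p q \<Longrightarrow> deflation C E q"
    using \<open>deflation C E g\<close> by blast+
qed

lemma deflation_pullbackE:
  assumes "deflation C E g" and g: "g \<in> hom C B D" and t: "t \<in> hom C T D"
  obtains P p q where "p \<in> hom C P B" and "q \<in> hom C P T" and "cmp C g p = cmp C t q"
    and "deflation C E q"
proof -
  obtain p q where pullback: "is_pullback C g t p q" using deflation_pullback(1)[OF assms] by blast
  then obtain B' D' T' P where "g \<in> hom C B' D'" "t \<in> hom C T' D'" "p \<in> hom C P B'" "q \<in> hom C P T'"
    "cmp C g p = cmp C t q" unfolding is_pullback_def by blast
  moreover have "B' = B" "T' = T" using homD(2) g t calculation(1,2) by metis+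
  ultimately show thesis using that deflation_pullback(2)[OF assms pullback] by blast
qed

lemma deflation_restrict_to_kernels:
  assumes a_kernel: "is_kernel C a c" and a: "a \<in> hom C U V" and c: "c \<in> hom C V A"
    and "deflation C E p" and p: "p \<in> hom C V P" and r: "r \<in> hom C P A" and rp: "cmp C r p = c"
    and m_kernel: "is_kernel C m r" and m: "m \<in> hom C I P"
  obtains w where "w \<in> hom C U I" and "cmp C m w = cmp C p a" and "deflation C E w"
proof -
  have "cmp C r (cmp C p a) = zerm C U A"
    using cmp_assoc[OF a p r] rp kernel_universal(1)[OF a_kernel a c] by simp
  then obtain w where w: "w \<in> hom C U I" and mw: "cmp C m w = cmp C p a"
    using kernel_factor[OF m_kernel m r cmp_hom[OF a p]] by blast
  have "is_pullback C p m a w"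
    using pullback_kernel_square[OF a_kernel a c p r m w kernel_mono[OF m_kernel m r]
      rp kernel_universal(1)[OF m_kernel m r] mw] .
  then have "deflation C E w" using deflation_pullback(2)[OF \<open>deflation C E p\<close> p m] by blast
  then show thesis using that w mw by blast
qed

text \<open>To factor t with e t = 0 through s m, pull the deflation s back along t: the
  pulled-back map x satisfies q r x = 0, so x agrees with a map through m up to the image of
  the kernel n of s; the resulting lift then descends along the deflation.\<close>
lemma kernel_cmp_of_conflation:
  assumes ns: "(n, s) \<in> E" and n: "n \<in> hom C A P" and s: "s \<in> hom C P W"
    and m_kernel: "is_kernel C m r" and m: "m \<in> hom C I P" and r: "r \<in> hom C P B"
    and i_kernel: "is_kernel C (cmp C r n) q" and q: "q \<in> hom C B Q" and e: "e \<in> hom C W Q"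
    and es: "cmp C e s = cmp C q r"
  shows "is_kernel C (cmp C s m) e"
proof -
  have rn: "cmp C r n \<in> hom C A B" using cmp_hom[OF n r] .
  have I: "I \<in> Ob C" and Q: "Q \<in> Ob C" using homD(4)[OF m] homD(5)[OF q] .
  have rm: "cmp C r m = zerm C I B" using kernel_universal(1)[OF m_kernel m r] .
  have mono: "is_mono C (cmp C s m)"
    using mono_cmp_of_kernels[OF conflation_kernel[OF ns] n s m r kernel_mono[OF m_kernel m r] rm
      kernel_mono[OF i_kernel rn q]] .
  show ?thesis
  proof (rule kernelI[OF cmp_hom[OF m s] e _ mono])
    show "cmp C e (cmp C s m) = zerm C I Q"
      using cmp_assoc[OF m s e] es cmp_assoc[OF m r q] rm cmp_zerm_right[OF q I] by simp
    fix T t assume t: "t \<in> hom C T W" and et: "cmp C e t = zerm C T Q"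
    have "deflation C E s" using ns unfolding deflation_def by blast
    then obtain T' x \<sigma> where x: "x \<in> hom C T' P" and \<sigma>: "\<sigma> \<in> hom C T' T"
      and sx: "cmp C s x = cmp C t \<sigma>" and "deflation C E \<sigma>"
      using deflation_pullbackE[OF _ s t] by blast
    then obtain \<kappa> where \<kappa>\<sigma>: "(\<kappa>, \<sigma>) \<in> E" unfolding deflation_def by blast
    have \<kappa>: "\<kappa> \<in> hom C (Dom C \<kappa>) T'" using conflation_hom_kernel[OF \<kappa>\<sigma> \<sigma>] .
    have \<sigma>_cokernel: "is_cokernel C \<sigma> \<kappa>" using conflation_cokernel[OF \<kappa>\<sigma>] .
    have "cmp C q (cmp C r x) = cmp C (cmp C e t) \<sigma>"
      using cmp_assoc[OF x r q] es cmp_assoc[OF x s e] sx cmp_assoc[OF \<sigma> t e] by simp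
    then have "cmp C q (cmp C r x) = zerm C T' Q" using et cmp_zerm_left[OF \<sigma> Q] by simp
    then obtain z where z: "z \<in> hom C T' A" and rnz: "cmp C (cmp C r n) z = cmp C r x"
      using kernel_factor[OF i_kernel rn q cmp_hom[OF x r]] by blast
    obtain y' where y': "y' \<in> hom C T' I" and smy': "cmp C s (cmp C m y') = cmp C s x"
      using factor_through_kernel_modulo[OF m_kernel m r n s
        kernel_universal(1)[OF conflation_kernel[OF ns] n s] x z]
        rnz cmp_assoc[OF z n r] by metis
    then obtain y where "y \<in> hom C T I" and "cmp C (cmp C s m) y = t"
      using mono_factor_through_cokernel[OF \<sigma>_cokernel \<kappa> \<sigma> cmp_hom[OF m s] mono t y']
        cmp_assoc[OF y' m s] sx by metis
    then show "\<exists>u. u \<in> hom C T I \<and> cmp C (cmp C s m) u = t" by blast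
  qed
qed

end

locale percolating_subcat = deflation_exact_cat +
  fixes \<A> :: "'o set"
  assumes is_percolating: "adm_defl_percolating C E \<A>"
begin

lemma conflation_in_A_iff: "(f, g) \<in> E \<Longrightarrow> Cod C f \<in> \<A> \<longleftrightarrow> Dom C f \<in> \<A> \<and> Cod C g \<in> \<A>"
  using is_percolating unfolding adm_defl_percolating_def by auto

lemma factorization_through_A:
  assumes "f \<in> hom C X Y" and "Y \<in> \<A>"
  obtains A' d i where "A' \<in> \<A>" and "d \<in> hom C X A'" and "i \<in> hom C A' Y"
    and "deflation C E d" and "inflation C E i" and "f = cmp C i d"
proof -
  have "\<forall>f X Y. f \<in> hom C X Y \<and> Y \<in> \<A> \<longrightarrow>
        (\<exists>A' d i. A' \<in> \<A> \<and> d \<in> hom C X A' \<and> i \<in> hom C A' Y \<and>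
            deflation C E d \<and> inflation C E i \<and> f = cmp C i d)"
    using is_percolating unfolding adm_defl_percolating_def by (elim conjE)
  then show thesis using assms that by blast
qed

lemma pushout_into_A:
  assumes "inflation C E a" and "deflation C E b" and "Dom C a = Dom C b" and "Cod C b \<in> \<A>"
  obtains a' b' where "is_pushout C a b a' b'" and "deflation C E b'" and "inflation C E a'"
proof -
  have "\<forall>a b. inflation C E a \<and> deflation C E b \<and> Dom C a = Dom C b \<and> Cod C b \<in> \<A> \<longrightarrow>
        (\<exists>a' b'. is_pushout C a b a' b') \<and>
        (\<forall>a' b'. is_pushout C a b a' b' \<longrightarrow> deflation C E b' \<and> inflation C E a')"
    using is_percolating unfolding adm_defl_percolating_def by (elim conjE)
  then show thesis using assms that by blast
qed

text \<open>Factor h = i d through A; as h is epi, the inflation i is an isomorphism.\<close>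
lemma epi_into_A_deflation:
  assumes h: "h \<in> hom C X Y" and "Y \<in> \<A>" and "is_epi C h"
  shows "deflation C E h"
proof -
  obtain A' d i where d: "d \<in> hom C X A'" and i: "i \<in> hom C A' Y"
    and "deflation C E d" and "inflation C E i" and hid: "h = cmp C i d"
    using factorization_through_A[OF h \<open>Y \<in> \<A>\<close>] by blast
  obtain g where ig: "(i, g) \<in> E" using \<open>inflation C E i\<close> unfolding inflation_def by blast
  obtain u where u: "u \<in> hom C Y A'" and iu: "cmp C i u = idt C Y" and ui: "cmp C u i = idt C A'"
    using kernel_epi_inverse[OF conflation_kernel[OF ig] i conflation_hom_cokernel[OF ig i]
      epi_cmp_cancel[OF d i]] hid \<open>is_epi C h\<close> by blast
  obtain f where fd: "(f, d) \<in> E" using \<open>deflation C E d\<close> unfolding deflation_def by blast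
  have "is_cokernel C h f"
    using cokernel_cmp_iso[OF conflation_cokernel[OF fd] conflation_hom_kernel[OF fd d] d i u ui iu] hid
    by simp
  then show ?thesis using conflation_replace_cokernel[OF fd] unfolding deflation_def by blast
qed

lemma admissible_cmp_of_factorization:
  assumes ac: "(a, c) \<in> E" and kb: "(k, b) \<in> E" and iq: "(i, q) \<in> E"
    and a: "a \<in> hom C U V" and c: "c \<in> hom C V A" and k: "k \<in> hom C B V" and b: "b \<in> hom C V W"
    and d: "d \<in> hom C B D" and i: "i \<in> hom C D A" and q: "q \<in> hom C A Q" and e: "e \<in> hom C W Q"
    and "deflation C E d" and "A \<in> \<A>" and "D \<in> \<A>" and "Q \<in> \<A>"
    and ck: "cmp C c k = cmp C i d" and eb: "cmp C e b = cmp C q c"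
  shows "admissible C E (cmp C b a)"
proof -
  have "inflation C E k" using kb unfolding inflation_def by blast
  moreover have "Dom C k = Dom C d" and "Cod C d \<in> \<A>" using homD(2,3) k d \<open>D \<in> \<A>\<close> by simp_all
  ultimately obtain n p where pushout: "is_pushout C k d n p" and "deflation C E p" and "inflation C E n"
    using pushout_into_A[OF _ \<open>deflation C E d\<close>] by blast
  obtain P where p: "p \<in> hom C V P" using pushout_hom[OF pushout k] by blast
  note n = pushoutD(1)[OF pushout k d p] and universal = pushoutD(3)[OF pushout k d p]
  obtain r where r: "r \<in> hom C P A" and rp: "cmp C r p = c" and rn: "cmp C r n = i"
    using ex1_implies_ex[OF universal[OF c i ck]] by blast
  obtain s where s: "s \<in> hom C P W" and sp: "cmp C s p = b" and s_cokernel: "is_cokernel C s n"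
    using cokernel_pushout[OF pushout conflation_cokernel[OF kb] k b d p] .
  obtain g where "(n, g) \<in> E" using \<open>inflation C E n\<close> unfolding inflation_def by blast
  then have ns: "(n, s) \<in> E" using conflation_replace_cokernel s_cokernel by blast
  have c_epi: "is_epi C c" using cokernel_epi[OF conflation_cokernel[OF ac] a c] .
  have "deflation C E r"
    using epi_into_A_deflation[OF r \<open>A \<in> \<A>\<close>] epi_cmp_cancel[OF p r] rp c_epi by simp
  then obtain m where mr: "(m, r) \<in> E" unfolding deflation_def by blast
  note m = conflation_hom_kernel[OF mr r] and m_kernel = conflation_kernel[OF mr]
  obtain w where w: "w \<in> hom C U (Dom C m)" and mw: "cmp C m w = cmp C p a" and "deflation C E w"
    using deflation_restrict_to_kernels[OF conflation_kernel[OF ac] a c \<open>deflation C E p\<close> p r rp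
      m_kernel m] .
  have "is_epi C (cmp C e b)"
    using eb epi_cmp[OF c q c_epi cokernel_epi[OF conflation_cokernel[OF iq] i q]] by simp
  then have "deflation C E e" using epi_into_A_deflation[OF e \<open>Q \<in> \<A>\<close>] epi_cmp_cancel[OF b e] by simp
  then obtain e' where e'e: "(e', e) \<in> E" unfolding deflation_def by blast
  have "cmp C (cmp C e s) p = cmp C (cmp C q r) p"
    using cmp_assoc[OF p s e] sp eb cmp_assoc[OF p r q] rp by simp
  then have es: "cmp C e s = cmp C q r"
    by (rule epiD[OF deflation_epi[OF \<open>deflation C E p\<close> p] p cmp_hom[OF s e] cmp_hom[OF r q]])
  have "is_kernel C (cmp C s m) e"
    using kernel_cmp_of_conflation[OF ns n s m_kernel m r _ q e es] conflation_kernel[OF iq] rn by simp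
  then have "inflation C E (cmp C s m)"
    using conflation_replace_kernel[OF e'e] unfolding inflation_def by blast
  moreover have "cmp C b a = cmp C (cmp C s m) w"
    using cmp_assoc[OF w m s] mw cmp_assoc[OF a p s] sp by simp
  moreover have "Cod C w = Dom C (cmp C s m)" using homD(3)[OF w] homD(2)[OF cmp_hom[OF m s]] by simp
  ultimately show ?thesis unfolding admissible_def using \<open>deflation C E w\<close> by blast
qed

lemma admissible_cmp_A_inflation_A_deflation:
  assumes a: "a \<in> hom C U V" and b: "b \<in> hom C V W"
    and "A_inflation C E \<A> a" and "A_deflation C E \<A> b"
  shows "admissible C E (cmp C b a) \<and>
         (\<exists>k. is_kernel C k (cmp C b a) \<and> Dom C k \<in> \<A>) \<and>
         (\<exists>c. is_cokernel C c (cmp C b a) \<and> Cod C c \<in> \<A>)"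
proof -
  obtain c where ac: "(a, c) \<in> E" and "Cod C c \<in> \<A>"
    using \<open>A_inflation C E \<A> a\<close> unfolding A_inflation_def by blast
  obtain k where kb: "(k, b) \<in> E" and "Dom C k \<in> \<A>"
    using \<open>A_deflation C E \<A> b\<close> unfolding A_deflation_def by blast
  note c = conflation_hom_cokernel[OF ac a] and k = conflation_hom_kernel[OF kb b]
  obtain D d i where "D \<in> \<A>" and d: "d \<in> hom C (Dom C k) D" and i: "i \<in> hom C D (Cod C c)"
    and "deflation C E d" and "inflation C E i" and ck: "cmp C c k = cmp C i d"
    using factorization_through_A[OF cmp_hom[OF k c] \<open>Cod C c \<in> \<A>\<close>] by blast
  obtain l where ld: "(l, d) \<in> E" using \<open>deflation C E d\<close> unfolding deflation_def by blast
  obtain q where iq: "(i, q) \<in> E" using \<open>inflation C E i\<close> unfolding inflation_def by blast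
  note l = conflation_hom_kernel[OF ld d] and q = conflation_hom_cokernel[OF iq i]
  have "Dom C l \<in> \<A>" and "Cod C q \<in> \<A>"
    using conflation_in_A_iff[OF ld] conflation_in_A_iff[OF iq] \<open>Dom C k \<in> \<A>\<close> \<open>Cod C c \<in> \<A>\<close>
      homD(2,3)[OF l] homD(2,3)[OF q] homD(2,3)[OF d] homD(2,3)[OF i] by auto
  obtain j where j: "j \<in> hom C (Dom C l) U" and "is_kernel C j (cmp C b a)"
    using kernel_cmp_of_factorization[OF conflation_kernel[OF ac] conflation_kernel[OF kb]
      conflation_kernel[OF ld] a c k b d i l kernel_mono[OF conflation_kernel[OF iq] i q] ck] .
  obtain e where e: "e \<in> hom C W (Cod C q)" and eb: "cmp C e b = cmp C q c"
    and "is_cokernel C e (cmp C b a)"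
    using cokernel_cmp_of_factorization[OF conflation_cokernel[OF ac] conflation_cokernel[OF kb]
      conflation_cokernel[OF iq] a c k b d i q deflation_epi[OF \<open>deflation C E d\<close> d] ck] .
  have "admissible C E (cmp C b a)"
    using admissible_cmp_of_factorization[OF ac kb iq a c k b d i q e \<open>deflation C E d\<close>
      \<open>Cod C c \<in> \<A>\<close> \<open>D \<in> \<A>\<close> \<open>Cod C q \<in> \<A>\<close> ck eb] .
  then show ?thesis
    using \<open>is_kernel C j (cmp C b a)\<close> \<open>is_cokernel C e (cmp C b a)\<close> homD(2)[OF j] homD(3)[OF e]
      \<open>Dom C l \<in> \<A>\<close> \<open>Cod C q \<in> \<A>\<close> by auto
qed

end

theorem mainTheorem10:
  fixes C :: "('o, 'm) addcat" and E :: "('m \<times> 'm) set" and \<A> :: "'o set"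
  assumes "deflation_exact C E"
    and "adm_defl_percolating C E \<A>"
    and "a \<in> hom C U V" and "b \<in> hom C V W"
    and "A_inflation C E \<A> a"
    and "A_deflation C E \<A> b"
  shows "admissible C E (cmp C b a) \<and>
         (\<exists>k. is_kernel C k (cmp C b a) \<and> Dom C k \<in> \<A>) \<and>
         (\<exists>c. is_cokernel C c (cmp C b a) \<and> Cod C c \<in> \<A>)"
proof -
  interpret percolating_subcat C E \<A>
    using assms(1,2) by unfold_locales
  show ?thesis using admissible_cmp_A_inflation_A_deflation[OF assms(3-6)] .
qed

end
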